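(* Let $\mathcal{M}=(S,A,\delta)$ be a finite fuzzy transition system and let $\gamma=1$. Then $d^1_f(s,t)\in\Theta_{\mathcal{M}}$ for all $s,t\in S$.
   Context: A fuzzy set on a finite set $X$ is a map $\mu:X\to[0,1]$; $\mathcal{F}(X)$ is the set of fuzzy sets on $X$ and $\mathcal{P}(X)$ the power set; $\mu(U)=\max_{x\in U}\mu(x)$. A fuzzy transition system is $\mathcal{M}=(S,A,\delta)$ with $S,A$ finite and $\delta:S\times A\to\mathcal{P}(\mathcal{F}(S))$, each $\delta(s,a)$ finite. $\Theta_{\mathcal{M}}$ is the set of all membership degrees $\mu(u)$ with $u\in S$ and $\mu\in\delta(s,a)$ for some $s\in S,a\in A$, together with $0$ and $1$. $\mathcal{D}(S)$ is the set of pseudo-ultrametrics $d:S\times S\to[0,1]$ ($d(x,x)=0$, symmetric, $d(x,z)\le\max(d(x,y),d(y,z))$), ordered pointwise by $\preceq$. Lifting: for $\mu,\eta\in\mathcal{F}(S)$, $\hat d(\mu,\eta)=1$ if $\mu(S)\ne\eta(S)$, and otherwise $\hat d(\mu,\eta)$ is the minimum of $\max_{u,v}\min(d(u,v),x_{uv})$ over all $x_{uv}\ge0$ with $\max_v x_{uv}=\mu(u)$ for all $u$ and $\max_u x_{uv}=\eta(v)$ for all $v$. For $\mu$ and finite $Z\subseteq\mathcal{F}(S)$: $\hat d(\mu,Z)=\min_{\eta\in Z}\hat d(\mu,\eta)$ if $Z\neq\emptyset$, else $1$. Hausdorff distance: $H_{\hat d}(\emptyset,\emptyset)=0$, otherwise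 $H_{\hat d}(Y,Z)=\max\big(\max_{\mu\in Y}\hat d(\mu,Z),\max_{\eta\in Z}\hat d(\eta,Y)\big)$. For a discounting factor $\gamma\in(0,1]$, the functional $\Delta:\mathcal{D}(S)\to\mathcal{D}(S)$ is $\Delta(d)(s,t)=\gamma\cdot\max_{a\in A}H_{\hat d}(\delta(s,a),\delta(t,a))$; it is monotone, and $d^\gamma_f$ denotes its least fixpoint. *)

theory Defs
  imports Complex_Main
begin

definition fuzzy_set :: "('s \<Rightarrow> real) \<Rightarrow> bool" where
  "fuzzy_set \<mu> \<longleftrightarrow> (\<forall>u. 0 \<le> \<mu> u \<and> \<mu> u \<le> 1)"

definition fts :: "('s::finite \<Rightarrow> 'a::finite \<Rightarrow> ('s \<Rightarrow> real) set) \<Rightarrow> bool" where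
  "fts \<delta> \<longleftrightarrow> (\<forall>s a. finite (\<delta> s a) \<and> (\<forall>\<mu>\<in>\<delta> s a. fuzzy_set \<mu>))"

definition height :: "('s::finite \<Rightarrow> real) \<Rightarrow> real" where
  "height \<mu> = Max (range \<mu>)"

definition Theta :: "('s \<Rightarrow> 'a \<Rightarrow> ('s \<Rightarrow> real) set) \<Rightarrow> real set" where
  "Theta \<delta> = {\<mu> u | u \<mu> s a. \<mu> \<in> \<delta> s a} \<union> {0, 1}"

definition pum :: "('s \<Rightarrow> 's \<Rightarrow> real) \<Rightarrow> bool" where
  "pum d \<longleftrightarrow> (\<forall>x y. 0 \<le> d x y \<and> d x y \<le> 1) \<and> (\<forall>x. d x x = 0)
     \<and> (\<forall>x y. d x y = d y x) \<and> (\<forall>x y z. d x z \<le> max (d x y) (d y z))"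

text \<open>Lifting of d to fuzzy sets (the minimum is attained; we write it as Inf).\<close>
definition lift :: "('s::finite \<Rightarrow> 's \<Rightarrow> real) \<Rightarrow> ('s \<Rightarrow> real) \<Rightarrow> ('s \<Rightarrow> real) \<Rightarrow> real" where
  "lift d \<mu> \<eta> = (if height \<mu> \<noteq> height \<eta> then 1 else
     Inf {Max ((\<lambda>(u, v). min (d u v) (x u v)) ` UNIV) | x.
            (\<forall>u v. 0 \<le> x u v) \<and> (\<forall>u. Max (range (x u)) = \<mu> u)
            \<and> (\<forall>v. Max (range (\<lambda>u. x u v)) = \<eta> v)})"

definition lift_set :: "('s::finite \<Rightarrow> 's \<Rightarrow> real) \<Rightarrow> ('s \<Rightarrow> real) \<Rightarrow> ('s \<Rightarrow> real) set \<Rightarrow> real" where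
  "lift_set d \<mu> Z = (if Z = {} then 1 else Min ((\<lambda>\<eta>. lift d \<mu> \<eta>) ` Z))"

definition max0 :: "real set \<Rightarrow> real" where
  "max0 A = (if A = {} then 0 else Max A)"

definition hausdorff :: "('s::finite \<Rightarrow> 's \<Rightarrow> real) \<Rightarrow> ('s \<Rightarrow> real) set \<Rightarrow> ('s \<Rightarrow> real) set \<Rightarrow> real" where
  "hausdorff d Y Z = (if Y = {} \<and> Z = {} then 0 else
     max (max0 ((\<lambda>\<mu>. lift_set d \<mu> Z) ` Y)) (max0 ((\<lambda>\<eta>. lift_set d \<eta> Y) ` Z)))"

definition Delta :: "real \<Rightarrow> ('s::finite \<Rightarrow> 'a::finite \<Rightarrow> ('s \<Rightarrow> real) set)
    \<Rightarrow> ('s \<Rightarrow> 's \<Rightarrow> real) \<Rightarrow> ('s \<Rightarrow> 's \<Rightarrow> real)" where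
  "Delta \<gamma> \<delta> d s t = \<gamma> * Max (range (\<lambda>a. hausdorff d (\<delta> s a) (\<delta> t a)))"

definition is_least_fix :: "real \<Rightarrow> ('s::finite \<Rightarrow> 'a::finite \<Rightarrow> ('s \<Rightarrow> real) set)
    \<Rightarrow> ('s \<Rightarrow> 's \<Rightarrow> real) \<Rightarrow> bool" where
  "is_least_fix \<gamma> \<delta> d \<longleftrightarrow> pum d \<and> Delta \<gamma> \<delta> d = d \<and>
     (\<forall>d'. pum d' \<and> Delta \<gamma> \<delta> d' = d' \<longrightarrow> (\<forall>s t. d s t \<le> d' s t))"

definition dfix :: "real \<Rightarrow> ('s::finite \<Rightarrow> 'a::finite \<Rightarrow> ('s \<Rightarrow> real) set) \<Rightarrow> ('s \<Rightarrow> 's \<Rightarrow> real)" where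
  "dfix \<gamma> \<delta> = (THE d. is_least_fix \<gamma> \<delta> d)"

end

theory Submission
  imports Defs
begin

text \<open>For \<open>\<gamma> = 1\<close> the functional \<open>\<Delta>\<close> does not rescale distances, so its values are values of
  the lifting. The lifting of \<open>d\<close> to two fuzzy sets \<open>\<mu>, \<eta>\<close> is a minimum over couplings: any
  coupling can be cut down, without increasing its cost, to one whose entries are
  \<open>min (\<mu> u) (\<eta> v)\<close> or \<open>0\<close>, and the cost of such a coupling is \<open>0\<close> or some
  \<open>min (d u v) (min (\<mu> u) (\<eta> v))\<close>. Hence \<open>\<Delta>\<close> maps \<open>\<Theta>\<close>-valued pseudo-ultrametrics to
  \<open>\<Theta>\<close>-valued ones. As \<open>\<Theta>\<close> is finite, the increasing Kleene iteration of \<open>\<Delta>\<close> from the zero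
  distance stabilizes after finitely many steps, at the least fixpoint.\<close>

lemma Max_range_eq_iff:
  "Max (range (f :: 'b::finite \<Rightarrow> 'c::linorder)) = c \<longleftrightarrow> (\<forall>v. f v \<le> c) \<and> (\<exists>v. f v = c)"
  by (auto simp: Max_eq_iff)

lemma Max_range_ge: "(f :: 'b::finite \<Rightarrow> 'c::linorder) v \<le> Max (range f)"
  by (rule Max_ge) auto

lemma Max_range_le_iff: "Max (range (f :: 'b::finite \<Rightarrow> 'c::linorder)) \<le> c \<longleftrightarrow> (\<forall>v. f v \<le> c)"
  by (auto simp: Max_le_iff)

lemma Max_range_attained:
  obtains v where "Max (range (f :: 'b::finite \<Rightarrow> 'c::linorder)) = f v"
  using Max_range_eq_iff by metis

lemma finite_funs_into:
  assumes "finite B"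
  shows "finite {f :: 'a::finite \<Rightarrow> 'b. \<forall>x. f x \<in> B}"
  using finite_set_of_finite_funs[of "UNIV :: 'a set" B] assms by simp

section \<open>Couplings\<close>

definition coupling :: "('s::finite \<Rightarrow> real) \<Rightarrow> ('s \<Rightarrow> real) \<Rightarrow> ('s \<Rightarrow> 's \<Rightarrow> real) set" where
  "coupling \<mu> \<eta> = {x. (\<forall>u v. 0 \<le> x u v) \<and> (\<forall>u. Max (range (x u)) = \<mu> u)
     \<and> (\<forall>v. Max (range (\<lambda>u. x u v)) = \<eta> v)}"

definition coupling_cost :: "('s::finite \<Rightarrow> 's \<Rightarrow> real) \<Rightarrow> ('s \<Rightarrow> 's \<Rightarrow> real) \<Rightarrow> real" where
  "coupling_cost d x = Max (range (\<lambda>(u, v). min (d u v) (x u v)))"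

definition maxmin_comp :: "('s::finite \<Rightarrow> 's \<Rightarrow> real) \<Rightarrow> ('s \<Rightarrow> 's \<Rightarrow> real) \<Rightarrow> 's \<Rightarrow> 's \<Rightarrow> real" where
  "maxmin_comp x y u w = Max (range (\<lambda>v. min (x u v) (y v w)))"

lemma coupling_iff:
  "x \<in> coupling \<mu> \<eta> \<longleftrightarrow>
     (\<forall>u v. 0 \<le> x u v \<and> x u v \<le> \<mu> u \<and> x u v \<le> \<eta> v)
     \<and> (\<forall>u. \<exists>v. x u v = \<mu> u) \<and> (\<forall>v. \<exists>u. x u v = \<eta> v)"
  unfolding coupling_def Max_range_eq_iff by blast

lemma coupling_cost_ge: "min (d u v) (x u v) \<le> coupling_cost d x"
  unfolding coupling_cost_def using Max_range_ge[of "\<lambda>(u, v). min (d u v) (x u v)" "(u, v)"] by simp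

lemma coupling_cost_le_iff: "coupling_cost d x \<le> c \<longleftrightarrow> (\<forall>u v. min (d u v) (x u v) \<le> c)"
  unfolding coupling_cost_def Max_range_le_iff by simp

lemma coupling_cost_attained:
  obtains u v where "coupling_cost d x = min (d u v) (x u v)"
proof -
  obtain p where "coupling_cost d x = (\<lambda>(u, v). min (d u v) (x u v)) p"
    unfolding coupling_cost_def by (rule Max_range_attained)
  thus thesis using that by (cases p) simp
qed

lemma product_coupling:
  assumes "\<forall>u. 0 \<le> \<mu> u" "\<forall>v. 0 \<le> \<eta> v" "height \<mu> = height \<eta>"
  shows "(\<lambda>u v. min (\<mu> u) (\<eta> v)) \<in> coupling \<mu> \<eta>"
proof -
  obtain u0 where u0: "height \<mu> = \<mu> u0" unfolding height_def by (rule Max_range_attained)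
  obtain v0 where v0: "height \<eta> = \<eta> v0" unfolding height_def by (rule Max_range_attained)
  have "\<mu> u \<le> \<eta> v0" "\<eta> v \<le> \<mu> u0" for u v
    using Max_range_ge[of \<mu> u] Max_range_ge[of \<eta> v] u0 v0 assms(3) unfolding height_def by simp_all
  hence "min (\<mu> u) (\<eta> v0) = \<mu> u" "min (\<mu> u0) (\<eta> v) = \<eta> v" for u v by simp_all
  thus ?thesis unfolding coupling_iff using assms(1,2) by auto
qed

lemma transpose_coupling: "x \<in> coupling \<mu> \<eta> \<Longrightarrow> (\<lambda>u v. x v u) \<in> coupling \<eta> \<mu>"
  unfolding coupling_iff by blast

lemma maxmin_comp_coupling:
  assumes x: "x \<in> coupling \<mu> \<eta>" and y: "y \<in> coupling \<eta> \<rho>"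
  shows "maxmin_comp x y \<in> coupling \<mu> \<rho>"
proof -
  note xc = x[unfolded coupling_iff] and yc = y[unfolded coupling_iff]
  have ge: "min (x u v) (y v w) \<le> maxmin_comp x y u w" for u v w
    unfolding maxmin_comp_def by (rule Max_range_ge)
  have bounds: "0 \<le> maxmin_comp x y u w \<and> maxmin_comp x y u w \<le> \<mu> u \<and> maxmin_comp x y u w \<le> \<rho> w"
    for u w
  proof -
    obtain v where "maxmin_comp x y u w = min (x u v) (y v w)"
      unfolding maxmin_comp_def by (rule Max_range_attained)
    moreover have "0 \<le> x u v" "x u v \<le> \<mu> u" "0 \<le> y v w" "y v w \<le> \<rho> w" using xc yc by auto
    ultimately show ?thesis by (auto simp: min_def)
  qed
  have row: "\<exists>w. maxmin_comp x y u w = \<mu> u" for u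
  proof -
    obtain v where v: "x u v = \<mu> u" using xc by blast
    obtain w where w: "y v w = \<eta> v" using yc by blast
    have "x u v \<le> \<eta> v" using xc by blast
    thus ?thesis using ge[of u v w] bounds[of u w] v w by (intro exI[of _ w]) linarith
  qed
  have col: "\<exists>u. maxmin_comp x y u w = \<rho> w" for w
  proof -
    obtain v where v: "y v w = \<rho> w" using yc by blast
    obtain u where u: "x u v = \<eta> v" using xc by blast
    have "y v w \<le> \<eta> v" using yc by blast
    thus ?thesis using ge[of u v w] bounds[of u w] u v by (intro exI[of _ u]) linarith
  qed
  show ?thesis unfolding coupling_iff using bounds row col by blast
qed

lemma coupling_cost_maxmin_comp:
  assumes "\<And>u v w. d u w \<le> max (d u v) (d v w)"
  shows "coupling_cost d (maxmin_comp x y) \<le> max (coupling_cost d x) (coupling_cost d y)"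
  unfolding coupling_cost_le_iff
proof (intro allI)
  fix u w
  obtain v where v: "maxmin_comp x y u w = min (x u v) (y v w)"
    unfolding maxmin_comp_def by (rule Max_range_attained)
  have "min (d u w) (min (x u v) (y v w)) \<le> max (min (d u v) (x u v)) (min (d v w) (y v w))"
    using assms[where u=u and v=v and w=w] by linarith
  also have "\<dots> \<le> max (coupling_cost d x) (coupling_cost d y)"
    by (intro max.mono coupling_cost_ge)
  finally show "min (d u w) (maxmin_comp x y u w) \<le> max (coupling_cost d x) (coupling_cost d y)"
    using v by simp
qed

definition threshold_coupling ::
    "('s \<Rightarrow> 's \<Rightarrow> real) \<Rightarrow> ('s \<Rightarrow> real) \<Rightarrow> ('s \<Rightarrow> real) \<Rightarrow> real \<Rightarrow> 's \<Rightarrow> 's \<Rightarrow> real" where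
  "threshold_coupling d \<mu> \<eta> c u v =
     (if min (d u v) (min (\<mu> u) (\<eta> v)) \<le> c then min (\<mu> u) (\<eta> v) else 0)"

definition cost_candidates :: "('s::finite \<Rightarrow> 's \<Rightarrow> real) \<Rightarrow> ('s \<Rightarrow> real) \<Rightarrow> ('s \<Rightarrow> real) \<Rightarrow> real set" where
  "cost_candidates d \<mu> \<eta> = insert 0 (range (\<lambda>(u, v). min (d u v) (min (\<mu> u) (\<eta> v))))"

lemma finite_cost_candidates: "finite (cost_candidates d \<mu> \<eta>)"
  unfolding cost_candidates_def by simp

lemma threshold_coupling_mem:
  assumes x: "x \<in> coupling \<mu> \<eta>"
  shows "threshold_coupling d \<mu> \<eta> (coupling_cost d x) \<in> coupling \<mu> \<eta>"
    (is "?x' \<in> _")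
proof -
  have x0: "0 \<le> x u v" and x\<mu>: "x u v \<le> \<mu> u" and x\<eta>: "x u v \<le> \<eta> v" for u v
    using x unfolding coupling_iff by blast+
  have below_cost: "min (d u v) (x u v) \<le> coupling_cost d x" for u v
    by (rule coupling_cost_ge)
  have "0 \<le> \<mu> u" "0 \<le> \<eta> v" for u v
    using x0[of u v] x\<mu>[of u v] x\<eta>[of u v] by linarith+
  hence "0 \<le> ?x' u v \<and> ?x' u v \<le> \<mu> u \<and> ?x' u v \<le> \<eta> v" for u v
    by (simp add: threshold_coupling_def)
  moreover have "\<exists>v. ?x' u v = \<mu> u" for u
  proof -
    obtain v where v: "x u v = \<mu> u" using x unfolding coupling_iff by blast
    thus ?thesis using below_cost[of u v] x\<eta>[of u v]
      by (intro exI[of _ v]) (simp add: threshold_coupling_def)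
  qed
  moreover have "\<exists>u. ?x' u v = \<eta> v" for v
  proof -
    obtain u where u: "x u v = \<eta> v" using x unfolding coupling_iff by blast
    thus ?thesis using below_cost[of u v] x\<mu>[of u v]
      by (intro exI[of _ u]) (simp add: threshold_coupling_def)
  qed
  ultimately show ?thesis unfolding coupling_iff by blast
qed

lemma coupling_cost_threshold_le:
  assumes "x \<in> coupling \<mu> \<eta>"
  shows "coupling_cost d (threshold_coupling d \<mu> \<eta> (coupling_cost d x)) \<le> coupling_cost d x"
  unfolding coupling_cost_le_iff
proof (intro allI)
  fix u v
  have "0 \<le> x u v" using assms unfolding coupling_iff by blast
  hence "min (d u v) 0 \<le> min (d u v) (x u v)" by (simp add: min.mono)
  thus "min (d u v) (threshold_coupling d \<mu> \<eta> (coupling_cost d x) u v) \<le> coupling_cost d x"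
    using coupling_cost_ge[of d u v x] by (auto simp: threshold_coupling_def)
qed

lemma coupling_cost_threshold_mem:
  assumes "\<forall>u v. 0 \<le> d u v"
  shows "coupling_cost d (threshold_coupling d \<mu> \<eta> c) \<in> cost_candidates d \<mu> \<eta>"
proof -
  obtain u v where "coupling_cost d (threshold_coupling d \<mu> \<eta> c) = min (d u v) (threshold_coupling d \<mu> \<eta> c u v)"
    by (rule coupling_cost_attained)
  thus ?thesis using assms by (auto simp: threshold_coupling_def cost_candidates_def)
qed

section \<open>The lifting of a pseudo-ultrametric to fuzzy sets\<close>

lemma pumD:
  assumes "pum d"
  shows "0 \<le> d x y" "d x y \<le> 1" "d x x = 0" "d x y = d y x" "d x z \<le> max (d x y) (d y z)"
  using assms unfolding pum_def by blast+

lemma lift_eq_Inf_cost: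
  "height \<mu> = height \<eta> \<Longrightarrow> lift d \<mu> \<eta> = Inf (coupling_cost d ` coupling \<mu> \<eta>)"
  unfolding lift_def coupling_def coupling_cost_def by (auto simp: image_def intro!: arg_cong[where f=Inf])

lemma lift_height_neq: "height \<mu> \<noteq> height \<eta> \<Longrightarrow> lift d \<mu> \<eta> = 1"
  unfolding lift_def by simp

lemma lift_le_coupling_cost:
  assumes "pum d" "height \<mu> = height \<eta>" "x \<in> coupling \<mu> \<eta>"
  shows "lift d \<mu> \<eta> \<le> coupling_cost d x"
proof -
  have "0 \<le> coupling_cost d y" if "y \<in> coupling \<mu> \<eta>" for y
  proof -
    have "0 \<le> min (d u u) (y u u)" for u using pumD(1)[OF assms(1)] that unfolding coupling_iff by simp
    thus ?thesis using coupling_cost_ge order_trans by metis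
  qed
  hence "bdd_below (coupling_cost d ` coupling \<mu> \<eta>)" by (intro bdd_belowI[where m=0]) auto
  thus ?thesis using assms by (simp add: lift_eq_Inf_cost cInf_lower)
qed

lemma lift_attained:
  assumes "pum d" "fuzzy_set \<mu>" "fuzzy_set \<eta>" and h: "height \<mu> = height \<eta>"
  obtains x where "x \<in> coupling \<mu> \<eta>" "lift d \<mu> \<eta> = coupling_cost d x"
    "coupling_cost d x \<in> cost_candidates d \<mu> \<eta>"
proof -
  have d: "\<forall>u v. 0 \<le> d u v" and \<mu>: "\<forall>u. 0 \<le> \<mu> u" and \<eta>: "\<forall>v. 0 \<le> \<eta> v"
    using assms(1-3) unfolding pum_def fuzzy_set_def by auto
  let ?V = "cost_candidates d \<mu> \<eta>"
  let ?W = "coupling_cost d ` coupling \<mu> \<eta>"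
  have reduce: "\<exists>x'\<in>coupling \<mu> \<eta>. coupling_cost d x' \<le> coupling_cost d x \<and> coupling_cost d x' \<in> ?V"
    if "x \<in> coupling \<mu> \<eta>" for x
    using threshold_coupling_mem[OF that] coupling_cost_threshold_le[OF that]
      coupling_cost_threshold_mem[OF d] by blast
  have fin: "finite (?W \<inter> ?V)" by (simp add: finite_cost_candidates)
  have ne: "?W \<inter> ?V \<noteq> {}" using reduce product_coupling[OF \<mu> \<eta> h] by blast
  define m where "m = Min (?W \<inter> ?V)"
  have mWV: "m \<in> ?W \<inter> ?V" unfolding m_def using fin ne by (rule Min_in)
  then obtain x where x: "x \<in> coupling \<mu> \<eta>" "m = coupling_cost d x" by blast
  have "Inf ?W = m"
  proof (rule cInf_eq_minimum)
    show "m \<in> ?W" using mWV by blast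
    fix w assume "w \<in> ?W"
    then obtain y where "y \<in> coupling \<mu> \<eta>" "w = coupling_cost d y" by blast
    then obtain y' where "y' \<in> coupling \<mu> \<eta>" "coupling_cost d y' \<le> w" "coupling_cost d y' \<in> ?V"
      using reduce by blast
    moreover from this have "m \<le> coupling_cost d y'" unfolding m_def using fin by (intro Min_le) auto
    ultimately show "m \<le> w" by linarith
  qed
  thus ?thesis using that[of x] x mWV h by (simp add: lift_eq_Inf_cost)
qed

lemma lift_mem:
  assumes "pum d" "fuzzy_set \<mu>" "fuzzy_set \<eta>"
    and "0 \<in> T" "1 \<in> T" "\<And>u v. d u v \<in> T" "\<And>u. \<mu> u \<in> T" "\<And>v. \<eta> v \<in> T"
  shows "lift d \<mu> \<eta> \<in> T"
proof (cases "height \<mu> = height \<eta>")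
  case True
  then obtain x where "lift d \<mu> \<eta> = coupling_cost d x" "coupling_cost d x \<in> cost_candidates d \<mu> \<eta>"
    using lift_attained[OF assms(1-3)] by blast
  thus ?thesis using assms(4-8) by (auto simp: cost_candidates_def min_def)
qed (simp add: lift_height_neq assms)

lemma lift_bounds:
  assumes "pum d" "fuzzy_set \<mu>" "fuzzy_set \<eta>"
  shows "lift d \<mu> \<eta> \<in> {0..1}"
  using assms by (intro lift_mem) (auto simp: pum_def fuzzy_set_def)

lemma lift_self:
  assumes d: "pum d" and \<mu>: "fuzzy_set \<mu>"
  shows "lift d \<mu> \<mu> = 0"
proof -
  let ?diag = "\<lambda>u v. if u = v then \<mu> u else 0"
  have "?diag \<in> coupling \<mu> \<mu>"
    using \<mu> unfolding coupling_iff fuzzy_set_def by auto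
  hence "lift d \<mu> \<mu> \<le> coupling_cost d ?diag" by (rule lift_le_coupling_cost[OF d refl])
  also have "\<dots> \<le> 0"
    unfolding coupling_cost_le_iff using pumD(3)[OF d] by auto
  finally show ?thesis using lift_bounds[OF d \<mu> \<mu>] by simp
qed

lemma lift_sym:
  assumes d: "pum d" and \<mu>: "fuzzy_set \<mu>" and \<eta>: "fuzzy_set \<eta>"
  shows "lift d \<mu> \<eta> = lift d \<eta> \<mu>"
proof -
  have le: "lift d \<mu> \<eta> \<le> lift d \<eta> \<mu>" if \<mu>: "fuzzy_set \<mu>" and \<eta>: "fuzzy_set \<eta>" for \<mu> \<eta>
  proof (cases "height \<mu> = height \<eta>")
    case True
    obtain y where y: "y \<in> coupling \<eta> \<mu>" "lift d \<eta> \<mu> = coupling_cost d y"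
      using lift_attained[OF d \<eta> \<mu>] True by metis
    have "lift d \<mu> \<eta> \<le> coupling_cost d (\<lambda>u v. y v u)"
      using lift_le_coupling_cost[OF d True transpose_coupling[OF y(1)]] .
    also have "\<dots> \<le> coupling_cost d y"
      unfolding coupling_cost_le_iff using coupling_cost_ge[of d _ _ y] pumD(4)[OF d] by metis
    finally show ?thesis using y(2) by simp
  qed (simp add: lift_height_neq)
  show ?thesis using le[OF \<mu> \<eta>] le[OF \<eta> \<mu>] by simp
qed

lemma lift_ultra:
  assumes d: "pum d" and \<mu>: "fuzzy_set \<mu>" and \<eta>: "fuzzy_set \<eta>" and \<rho>: "fuzzy_set \<rho>"
  shows "lift d \<mu> \<rho> \<le> max (lift d \<mu> \<eta>) (lift d \<eta> \<rho>)"
proof (cases "height \<mu> = height \<eta> \<and> height \<eta> = height \<rho>")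
  case True
  obtain x where x: "x \<in> coupling \<mu> \<eta>" "lift d \<mu> \<eta> = coupling_cost d x"
    using lift_attained[OF d \<mu> \<eta>] True by metis
  obtain y where y: "y \<in> coupling \<eta> \<rho>" "lift d \<eta> \<rho> = coupling_cost d y"
    using lift_attained[OF d \<eta> \<rho>] True by metis
  have "lift d \<mu> \<rho> \<le> coupling_cost d (maxmin_comp x y)"
    using True maxmin_comp_coupling[OF x(1) y(1)] by (intro lift_le_coupling_cost[OF d]) auto
  also have "\<dots> \<le> max (lift d \<mu> \<eta>) (lift d \<eta> \<rho>)"
    unfolding x(2) y(2) by (rule coupling_cost_maxmin_comp) (rule pumD(5)[OF d])
  finally show ?thesis .
next
  case False
  hence "lift d \<mu> \<eta> = 1 \<or> lift d \<eta> \<rho> = 1" using lift_height_neq by metis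
  thus ?thesis using lift_bounds[OF d \<mu> \<rho>] by auto
qed

lemma lift_mono:
  assumes d: "pum d" and d': "pum d'" and le: "\<And>u v. d u v \<le> d' u v"
    and \<mu>: "fuzzy_set \<mu>" and \<eta>: "fuzzy_set \<eta>"
  shows "lift d \<mu> \<eta> \<le> lift d' \<mu> \<eta>"
proof (cases "height \<mu> = height \<eta>")
  case True
  obtain y where y: "y \<in> coupling \<mu> \<eta>" "lift d' \<mu> \<eta> = coupling_cost d' y"
    using lift_attained[OF d' \<mu> \<eta>] True by metis
  have "lift d \<mu> \<eta> \<le> coupling_cost d y" by (rule lift_le_coupling_cost[OF d True y(1)])
  also have "\<dots> \<le> coupling_cost d' y"
    unfolding coupling_cost_le_iff using le coupling_cost_ge[of d' _ _ y] by (meson min.mono order_refl order_trans)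
  finally show ?thesis using y(2) by simp
qed (simp add: lift_height_neq)

section \<open>The Hausdorff lifting\<close>

definition fuzzy_family :: "('s \<Rightarrow> real) set \<Rightarrow> bool" where
  "fuzzy_family Y \<longleftrightarrow> finite Y \<and> (\<forall>\<mu>\<in>Y. fuzzy_set \<mu>)"

definition dir_hausdorff :: "('s::finite \<Rightarrow> 's \<Rightarrow> real) \<Rightarrow> ('s \<Rightarrow> real) set \<Rightarrow> ('s \<Rightarrow> real) set \<Rightarrow> real" where
  "dir_hausdorff d Y Z = max0 ((\<lambda>\<mu>. lift_set d \<mu> Z) ` Y)"

lemma hausdorff_eq_max_dir: "hausdorff d Y Z = max (dir_hausdorff d Y Z) (dir_hausdorff d Z Y)"
  unfolding hausdorff_def dir_hausdorff_def max0_def by simp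

lemma max0_ge: "finite A \<Longrightarrow> a \<in> A \<Longrightarrow> a \<le> max0 A"
  unfolding max0_def by auto

lemma max0_le: "finite A \<Longrightarrow> 0 \<le> c \<Longrightarrow> (\<And>a. a \<in> A \<Longrightarrow> a \<le> c) \<Longrightarrow> max0 A \<le> c"
  unfolding max0_def by auto

lemma max0_mem: "finite A \<Longrightarrow> 0 \<in> T \<Longrightarrow> A \<subseteq> T \<Longrightarrow> max0 A \<in> T"
  unfolding max0_def using Max_in by auto

lemma lift_set_le: "finite Z \<Longrightarrow> \<eta> \<in> Z \<Longrightarrow> lift_set d \<mu> Z \<le> lift d \<mu> \<eta>"
  unfolding lift_set_def by auto

lemma lift_set_attained:
  assumes "finite Z" "Z \<noteq> {}"
  obtains \<eta> where "\<eta> \<in> Z" "lift_set d \<mu> Z = lift d \<mu> \<eta>"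
proof -
  have "Min (lift d \<mu> ` Z) \<in> lift d \<mu> ` Z" using assms by (intro Min_in) auto
  thus thesis using that assms(2) unfolding lift_set_def by auto
qed

lemma lift_set_mem:
  assumes "finite Z" "1 \<in> T" "\<And>\<eta>. \<eta> \<in> Z \<Longrightarrow> lift d \<mu> \<eta> \<in> T"
  shows "lift_set d \<mu> Z \<in> T"
proof (cases "Z = {}")
  case False
  then obtain \<eta> where "\<eta> \<in> Z" "lift_set d \<mu> Z = lift d \<mu> \<eta>"
    using lift_set_attained[OF assms(1)] by metis
  thus ?thesis using assms(3) by simp
qed (simp add: lift_set_def assms(2))

lemma dir_hausdorff_ge: "finite Y \<Longrightarrow> \<mu> \<in> Y \<Longrightarrow> lift_set d \<mu> Z \<le> dir_hausdorff d Y Z"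
  unfolding dir_hausdorff_def by (intro max0_ge) auto

lemma dir_hausdorff_mem:
  assumes "finite Y" "finite Z" "0 \<in> T" "1 \<in> T" "\<And>\<mu> \<eta>. \<mu> \<in> Y \<Longrightarrow> \<eta> \<in> Z \<Longrightarrow> lift d \<mu> \<eta> \<in> T"
  shows "dir_hausdorff d Y Z \<in> T"
  unfolding dir_hausdorff_def using assms by (intro max0_mem) (auto intro: lift_set_mem)

lemma lift_set_bounds:
  assumes "pum d" "fuzzy_set \<mu>" "fuzzy_family Z"
  shows "lift_set d \<mu> Z \<in> {0..1}"
  using assms lift_bounds[OF assms(1,2)] unfolding fuzzy_family_def by (intro lift_set_mem) auto

lemma dir_hausdorff_bounds:
  assumes "pum d" "fuzzy_family Y" "fuzzy_family Z"
  shows "dir_hausdorff d Y Z \<in> {0..1}"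
  using assms lift_bounds[OF assms(1)] unfolding fuzzy_family_def by (intro dir_hausdorff_mem) auto

lemma dir_hausdorff_self:
  assumes d: "pum d" and Y: "fuzzy_family Y"
  shows "dir_hausdorff d Y Y = 0"
proof -
  have "lift_set d \<mu> Y \<le> 0" if "\<mu> \<in> Y" for \<mu>
    using lift_set_le[of Y \<mu> d \<mu>] lift_self[OF d] Y that unfolding fuzzy_family_def by auto
  hence "dir_hausdorff d Y Y \<le> 0"
    unfolding dir_hausdorff_def using Y unfolding fuzzy_family_def by (intro max0_le) auto
  thus ?thesis using dir_hausdorff_bounds[OF d Y Y] by simp
qed

lemma lift_set_ultra:
  assumes d: "pum d" and \<mu>: "fuzzy_set \<mu>" and Z: "fuzzy_family Z" and W: "fuzzy_family W"
  shows "lift_set d \<mu> W \<le> max (lift_set d \<mu> Z) (dir_hausdorff d Z W)"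
proof -
  note fam = Z[unfolded fuzzy_family_def] W[unfolded fuzzy_family_def]
  have le1: "lift_set d \<mu> W \<le> 1" using lift_set_bounds[OF d \<mu> W] by simp
  show ?thesis
  proof (cases "Z = {}")
    case True thus ?thesis using le1 by (simp add: lift_set_def)
  next
    case False
    then obtain \<eta> where \<eta>: "\<eta> \<in> Z" "lift_set d \<mu> Z = lift d \<mu> \<eta>"
      using lift_set_attained fam by metis
    have \<eta>W: "lift_set d \<eta> W \<le> dir_hausdorff d Z W" using dir_hausdorff_ge fam \<eta>(1) by metis
    show ?thesis
    proof (cases "W = {}")
      case True thus ?thesis using le1 \<eta>W by (simp add: lift_set_def)
    next
      case False
      then obtain \<rho> where \<rho>: "\<rho> \<in> W" "lift_set d \<eta> W = lift d \<eta> \<rho>"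
        using lift_set_attained fam by metis
      have "lift_set d \<mu> W \<le> lift d \<mu> \<rho>" using lift_set_le fam \<rho>(1) by metis
      also have "\<dots> \<le> max (lift d \<mu> \<eta>) (lift d \<eta> \<rho>)"
        using lift_ultra[OF d \<mu>] fam \<eta>(1) \<rho>(1) by blast
      finally show ?thesis using \<eta> \<rho>(2) \<eta>W by simp
    qed
  qed
qed

lemma dir_hausdorff_ultra:
  assumes d: "pum d" and Y: "fuzzy_family Y" and Z: "fuzzy_family Z" and W: "fuzzy_family W"
  shows "dir_hausdorff d Y W \<le> max (dir_hausdorff d Y Z) (dir_hausdorff d Z W)"
proof -
  note fam = Y[unfolded fuzzy_family_def]
  have "lift_set d \<mu> W \<le> max (dir_hausdorff d Y Z) (dir_hausdorff d Z W)" if "\<mu> \<in> Y" for \<mu>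
    using lift_set_ultra[OF d _ Z W, of \<mu>] dir_hausdorff_ge[of Y \<mu> d Z] fam that by fastforce
  moreover have "0 \<le> dir_hausdorff d Y Z" using dir_hausdorff_bounds[OF d Y Z] by simp
  ultimately show ?thesis unfolding dir_hausdorff_def using fam by (intro max0_le) auto
qed

lemma dir_hausdorff_mono:
  assumes d: "pum d" and d': "pum d'" and le: "\<And>u v. d u v \<le> d' u v"
    and Y: "fuzzy_family Y" and Z: "fuzzy_family Z"
  shows "dir_hausdorff d Y Z \<le> dir_hausdorff d' Y Z"
proof -
  note fam = Y[unfolded fuzzy_family_def] Z[unfolded fuzzy_family_def]
  have "lift_set d \<mu> Z \<le> dir_hausdorff d' Y Z" if \<mu>: "\<mu> \<in> Y" for \<mu>
  proof (cases "Z = {}")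
    case True thus ?thesis using dir_hausdorff_ge[of Y \<mu> d' Z] fam \<mu> by (simp add: lift_set_def)
  next
    case False
    then obtain \<eta> where \<eta>: "\<eta> \<in> Z" "lift_set d' \<mu> Z = lift d' \<mu> \<eta>"
      using lift_set_attained fam by metis
    have "lift_set d \<mu> Z \<le> lift d \<mu> \<eta>" using lift_set_le fam \<eta> by metis
    also have "\<dots> \<le> lift d' \<mu> \<eta>" using lift_mono[OF d d' le] fam \<mu> \<eta> by blast
    also have "\<dots> \<le> dir_hausdorff d' Y Z" using dir_hausdorff_ge[of Y \<mu> d' Z] fam \<mu> \<eta> by simp
    finally show ?thesis .
  qed
  moreover have "0 \<le> dir_hausdorff d' Y Z" using dir_hausdorff_bounds[OF d' Y Z] by auto
  ultimately show ?thesis unfolding dir_hausdorff_def using fam by (intro max0_le) auto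
qed

lemma hausdorff_bounds:
  assumes "pum d" "fuzzy_family Y" "fuzzy_family Z"
  shows "hausdorff d Y Z \<in> {0..1}"
  using dir_hausdorff_bounds[OF assms] dir_hausdorff_bounds[OF assms(1,3,2)]
  by (auto simp: hausdorff_eq_max_dir le_max_iff_disj)

lemma hausdorff_self: "pum d \<Longrightarrow> fuzzy_family Y \<Longrightarrow> hausdorff d Y Y = 0"
  by (simp add: hausdorff_eq_max_dir dir_hausdorff_self)

lemma hausdorff_sym: "hausdorff d Y Z = hausdorff d Z Y"
  by (simp add: hausdorff_eq_max_dir max.commute)

lemma hausdorff_ultra:
  assumes "pum d" "fuzzy_family Y" "fuzzy_family Z" "fuzzy_family W"
  shows "hausdorff d Y W \<le> max (hausdorff d Y Z) (hausdorff d Z W)"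
  using dir_hausdorff_ultra[OF assms(1,2,3,4)] dir_hausdorff_ultra[OF assms(1,4,3,2)]
  by (auto simp: hausdorff_eq_max_dir)

lemma hausdorff_mono:
  "pum d \<Longrightarrow> pum d' \<Longrightarrow> (\<And>u v. d u v \<le> d' u v) \<Longrightarrow> fuzzy_family Y \<Longrightarrow> fuzzy_family Z
    \<Longrightarrow> hausdorff d Y Z \<le> hausdorff d' Y Z"
  unfolding hausdorff_eq_max_dir by (intro max.mono dir_hausdorff_mono)

lemma hausdorff_mem:
  assumes "finite Y" "finite Z" "0 \<in> T" "1 \<in> T"
    and "\<And>\<mu> \<eta>. \<mu> \<in> Y \<union> Z \<Longrightarrow> \<eta> \<in> Y \<union> Z \<Longrightarrow> lift d \<mu> \<eta> \<in> T"
  shows "hausdorff d Y Z \<in> T"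
  using dir_hausdorff_mem[of Y Z T d] dir_hausdorff_mem[of Z Y T d] assms
  by (simp add: hausdorff_eq_max_dir max_def)

section \<open>The functional \<open>\<Delta>\<close>\<close>

lemma fts_fuzzy_family: "fts \<delta> \<Longrightarrow> fuzzy_family (\<delta> s a)"
  unfolding fts_def fuzzy_family_def by blast

lemma Delta_pum:
  assumes f: "fts \<delta>" and d: "pum d" and \<gamma>: "0 \<le> \<gamma>" "\<gamma> \<le> 1"
  shows "pum (Delta \<gamma> \<delta> d)"
proof -
  let ?H = "\<lambda>s t a. hausdorff d (\<delta> s a) (\<delta> t a)"
  let ?M = "\<lambda>s t. Max (range (?H s t))"
  note fam = fts_fuzzy_family[OF f]
  have M01: "0 \<le> ?M s t \<and> ?M s t \<le> 1" for s t
  proof -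
    obtain a where "?M s t = ?H s t a" by (rule Max_range_attained)
    thus ?thesis using hausdorff_bounds[OF d fam fam] by simp
  qed
  have refl: "?M s s = 0" for s by (simp add: hausdorff_self[OF d fam])
  have sym: "?M s t = ?M t s" for s t by (simp add: hausdorff_sym)
  have ultra: "?M s u \<le> max (?M s t) (?M t u)" for s t u
    unfolding Max_range_le_iff
  proof
    fix a
    have "?H s u a \<le> max (?H s t a) (?H t u a)" by (rule hausdorff_ultra[OF d fam fam fam])
    also have "\<dots> \<le> max (?M s t) (?M t u)" by (intro max.mono Max_range_ge)
    finally show "?H s u a \<le> max (?M s t) (?M t u)" .
  qed
  show ?thesis
    unfolding pum_def Delta_def
  proof (intro conjI allI)
    fix s t u
    show "0 \<le> \<gamma> * ?M s t" "\<gamma> * ?M s t \<le> 1" using M01[of s t] \<gamma> by (simp_all add: mult_le_one)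
    show "\<gamma> * ?M s s = 0" by (simp add: refl)
    show "\<gamma> * ?M s t = \<gamma> * ?M t s" by (simp only: sym[of s t])
    show "\<gamma> * ?M s u \<le> max (\<gamma> * ?M s t) (\<gamma> * ?M t u)"
      using mult_left_mono[OF ultra \<gamma>(1)] \<gamma>(1) by (simp add: max_mult_distrib_left)
  qed
qed

lemma Delta_mono:
  assumes f: "fts \<delta>" and d: "pum d" and d': "pum d'" and le: "d \<le> d'" and \<gamma>: "0 \<le> \<gamma>"
  shows "Delta \<gamma> \<delta> d \<le> Delta \<gamma> \<delta> d'"
proof -
  have "hausdorff d (\<delta> s a) (\<delta> t a) \<le> hausdorff d' (\<delta> s a) (\<delta> t a)" for s t a
    using hausdorff_mono[OF d d'] le fts_fuzzy_family[OF f] by (simp add: le_fun_def)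
  hence "Max (range (\<lambda>a. hausdorff d (\<delta> s a) (\<delta> t a)))
      \<le> Max (range (\<lambda>a. hausdorff d' (\<delta> s a) (\<delta> t a)))" for s t
    unfolding Max_range_le_iff by (meson Max_range_ge order_trans)
  thus ?thesis using \<gamma> unfolding Delta_def le_fun_def by (simp add: mult_left_mono)
qed

lemma finite_Theta: "fts \<delta> \<Longrightarrow> finite (Theta \<delta>)"
proof -
  assume "fts \<delta>"
  hence "finite (\<Union>s. \<Union>a. \<Union>\<mu>\<in>\<delta> s a. range \<mu>)" by (auto simp: fts_def)
  moreover have "Theta \<delta> \<subseteq> {0, 1} \<union> (\<Union>s. \<Union>a. \<Union>\<mu>\<in>\<delta> s a. range \<mu>)"
    unfolding Theta_def by blast
  ultimately show ?thesis by (simp add: finite_subset)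
qed

lemma Delta_Theta:
  assumes f: "fts \<delta>" and d: "pum d" and dT: "\<And>u v. d u v \<in> Theta \<delta>"
  shows "Delta 1 \<delta> d s t \<in> Theta \<delta>"
proof -
  have T01: "0 \<in> Theta \<delta>" "1 \<in> Theta \<delta>" by (simp_all add: Theta_def)
  have "\<mu> u \<in> Theta \<delta>" if "\<mu> \<in> \<delta> s' a" for \<mu> u s' a using that unfolding Theta_def by blast
  hence "hausdorff d (\<delta> s a) (\<delta> t a) \<in> Theta \<delta>" for a
    using fts_fuzzy_family[OF f] T01 dT unfolding fuzzy_family_def
    by (intro hausdorff_mem lift_mem[OF d]) blast+
  moreover obtain a where "Delta 1 \<delta> d s t = hausdorff d (\<delta> s a) (\<delta> t a)"
    unfolding Delta_def mult_1 by (rule Max_range_attained)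
  ultimately show ?thesis by simp
qed

section \<open>Least fixpoints reached by finite iteration\<close>

lemma finite_iteration_least_fixpoint:
  fixes F :: "'b::order \<Rightarrow> 'b"
  assumes b: "P b" "\<And>x. P x \<Longrightarrow> b \<le> x" "b \<in> Q"
    and closed: "\<And>x. P x \<Longrightarrow> P (F x)" "\<And>x. P x \<Longrightarrow> x \<in> Q \<Longrightarrow> F x \<in> Q"
    and mono: "\<And>x y. P x \<Longrightarrow> P y \<Longrightarrow> x \<le> y \<Longrightarrow> F x \<le> F y"
    and fin: "finite Q"
  obtains x where "P x" "x \<in> Q" "F x = x" "\<And>y. P y \<Longrightarrow> F y = y \<Longrightarrow> x \<le> y"
proof -
  define it where "it n = (F ^^ n) b" for n
  have it_Suc: "it (Suc n) = F (it n)" for n by (simp add: it_def)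
  have inv: "P (it n)" "it n \<in> Q" for n
    by (induction n) (simp_all add: it_def b closed)
  have "it n \<le> it (Suc n)" for n
  proof (induction n)
    case 0
    show ?case using b(2) closed(1)[OF b(1)] by (simp add: it_def)
  next
    case (Suc n)
    show ?case using mono[OF inv(1) inv(1) Suc.IH] by (simp add: it_Suc)
  qed
  hence "mono it" by (simp add: mono_iff_le_Suc)
  moreover have "finite (range it)" using fin inv(2) by (meson finite_subset image_subsetI)
  moreover have "\<forall>n. it n = it (Suc n) \<longrightarrow> it (Suc n) = it (Suc (Suc n))" by (simp add: it_Suc)
  ultimately obtain N where "\<forall>n\<ge>N. it N = it n"
    using finite_mono_remains_stable_implies_strict_prefix by blast
  hence "it N = it (Suc N)" by simp
  hence stable: "F (it N) = it N" by (simp add: it_Suc)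
  have "it n \<le> y" if "P y" "F y = y" for n y
  proof (induction n)
    case 0
    show ?case using b(2)[OF that(1)] by (simp add: it_def)
  next
    case (Suc n)
    show ?case using mono[OF inv(1) that(1) Suc.IH] that(2) by (simp add: it_Suc)
  qed
  thus ?thesis using that inv stable by blast
qed

lemma dfix_eqI:
  assumes "is_least_fix \<gamma> \<delta> d"
  shows "dfix \<gamma> \<delta> = d"
  unfolding dfix_def
proof (rule the_equality[where P = "is_least_fix \<gamma> \<delta>", OF assms])
  fix d' assume "is_least_fix \<gamma> \<delta> d'"
  with assms have "d' \<le> d" "d \<le> d'" unfolding is_least_fix_def le_fun_def by blast+
  thus "d' = d" by (rule order_antisym)
qed

theorem lemma4:
  fixes \<delta> :: "'s::finite \<Rightarrow> 'a::finite \<Rightarrow> ('s \<Rightarrow> real) set"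
  assumes "fts \<delta>"
  shows "\<forall>s t. dfix 1 \<delta> s t \<in> Theta \<delta>"
proof -
  let ?Q = "{d :: 's \<Rightarrow> 's \<Rightarrow> real. \<forall>s t. d s t \<in> Theta \<delta>}"
  have fin: "finite ?Q"
    using finite_funs_into[where 'a='s, OF finite_funs_into[where 'a='s, OF finite_Theta[OF assms]]]
    by simp
  have zero: "pum (\<lambda>_ _. 0)" "\<And>d. pum d \<Longrightarrow> (\<lambda>_ _. 0) \<le> d" "(\<lambda>_ _. 0) \<in> ?Q"
    by (auto simp: pum_def le_fun_def Theta_def)
  have closed: "pum (Delta 1 \<delta> d)" "d \<in> ?Q \<Longrightarrow> Delta 1 \<delta> d \<in> ?Q" if "pum d" for d
    using Delta_pum[OF assms that] Delta_Theta[OF assms that] by auto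
  have mono: "Delta 1 \<delta> d \<le> Delta 1 \<delta> d'" if "pum d" "pum d'" "d \<le> d'" for d d'
    using Delta_mono[OF assms that] by simp
  obtain d where "pum d" "d \<in> ?Q" "Delta 1 \<delta> d = d"
    and "\<And>d'. pum d' \<Longrightarrow> Delta 1 \<delta> d' = d' \<Longrightarrow> d \<le> d'"
    using finite_iteration_least_fixpoint[where P = pum and F = "Delta 1 \<delta>", OF zero closed mono fin]
    by blast
  hence "is_least_fix 1 \<delta> d" unfolding is_least_fix_def by (auto simp: le_fun_def)
  thus ?thesis using \<open>d \<in> ?Q\<close> by (simp add: dfix_eqI)
qed

end
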